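(* For every non-anticipative policy $\hat{\mathbf{a}}\in\mathbb{A}_{\mathbb{G}}$ and approximations $\hat J_k$, the functions $M_1$ and $M_2$ defined below are dual feasible penalties, i.e. $M_1,M_2\in\mathcal{M}_{\mathbb{G}}(0)$; consequently $(\mathcal{L}M_1)(\phi_0,W_0)$ and $(\mathcal{L}M_2)(\phi_0,W_0)$ are upper bounds on $H_0(\phi_0,W_0)$.
   Context: Discrete-time portfolio model with $n$ risky assets, market state $\phi_k\in\mathbb{R}^m$, wealth $W_k$, times $k=0,\dots,K$, step $\delta>0$. $\{(Z_k,\tilde Z_k)\}_{k=1}^K$ are i.i.d. standard Gaussian vectors ($Z_k\in\mathbb{R}^n$, $\tilde Z_k\in\mathbb{R}^d$, independent), $\mathcal{G}_k=\sigma(Z_j,\tilde Z_j,j\le k)$, $\mathbb{G}=\{\mathcal{G}_k\}$. Dynamics: $\phi_{k+1}=\phi_k+\mu^\phi_k\delta+\sigma^{\phi,1}_k\sqrt\delta Z_{k+1}+\sigma^{\phi,2}_k\sqrt\delta\tilde Z_{k+1}$; $\log R_{k+1}=(\mu_k-\tfrac12\sigma_k^2)\delta+\sigma_k\sqrt\delta Z_{k+1}$ (componentwise, $\sigma_k^2$ = diagonal of $\sigma_k\sigma_k^\top$); $W_{k+1}=W_kR_f+(R_{k+1}-R_f\mathbf{1}_n)^\top\Pi_k-C_k$, where $\mu^\phi_k=\mu^\phi(k,\phi_k)$, $\sigma^{\phi,1}_k=\sigma^{\phi,1}(k,\phi_k)\in\mathbb{R}^{m\times n}$, $\sigma^{\phi,2}_k=\sigma^{\phi,2}(k,\phi_k)\in\mathbb{R}^{m\times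 d}$, $\mu_k=\mu(k,\phi_k)$, $\sigma_k=\sigma(k,\phi_k)\in\mathbb{R}^{n\times n}$, $R_f=1+r_f\delta$. Controls $a_k=(\Pi_k,C_k)$ (dollar amounts in risky assets and consumption) with constraints $\Pi_k\ge0$, $C_k\ge0$, $C_k\le R_f(W_k-\mathbf{1}_n^\top\Pi_k)$. $\mathbb{A}$: all such control sequences $\mathbf{a}=(a_0,\dots,a_{K-1})$ (possibly depending on the whole of $(\mathbf{Z},\tilde{\mathbf{Z}})$); $\mathbb{A}_{\mathbb{G}}$: those with $a_k$ $\mathcal{G}_k$-measurable. Utility $U(x)=x^{1-\gamma}/(1-\gamma)$, $\gamma>0$, weights $\alpha\in[0,1]$, discount $\beta$. $H_0(\phi_0,W_0)=\sup_{\mathbf{a}\in\mathbb{A}_{\mathbb{G}}}\mathbb{E}[\sum_{k=0}^{K-1}\alpha\beta^{k\delta}U(C_k)\delta+(1-\alpha)\beta^{K\delta}U(W_K)\mid\phi_0,W_0]$. $\mathcal{M}_{\mathbb{G}}(0)$: functions $M(\mathbf{a},\mathbf{Z},\tilde{\mathbf{Z}})$ with $\mathbb{E}[M(\mathbf{a},\mathbf{Z},\tilde{\mathbf{Z}})\mid\phi_0,W_0]\le0$ for all $(\phi_0,W_0)$ and all $\mathbf{a}\in\mathbb{A}_{\mathbb{G}}$. $(\mathcal{L}M)(\phi_0,W_0)=\mathbb{E}[\sup_{\mathbf{a}\in\mathbb{A}}\{\sum_{k=0}^{K-1}\alpha\beta^{k\delta}U(C_k)\delta+(1-\alpha)\beta^{K\delta}U(W_K)-M(\mathbf{a},\mathbf{Z},\tilde{\mathbf{Z}})\}\mid\phi_0,W_0]$.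 Penalty construction: let $\hat J_k:\mathbb{R}^m\to\mathbb{R}$ be approximate functions with (generalized) gradients $\nabla_\phi\hat J_k$ (e.g. slopes of piecewise linear interpolants), and fix $\hat{\mathbf{a}}=(\hat\Pi_k,\hat C_k)\in\mathbb{A}_{\mathbb{G}}$. Along a realization, $\bar\phi_k$ is the market state, $\bar R_k$ the return, $\bar\sigma_k,\bar\sigma^{\phi,1}_k,\bar\sigma^{\phi,2}_k$ the coefficients at $\bar\phi_k$, $\bar W_k$ the wealth and $\bar\Pi_k,\bar C_k$ the controls under $\hat{\mathbf{a}}$ from $(\phi_0,W_0)$. Set $\Psi^1_{k+1}=\bar W_k^{1-\gamma}\nabla_\phi\hat J_k(\bar\phi_k)^\top\bar\sigma^{\phi,1}_k\sqrt\delta Z_{k+1}$, $\Psi^2_{k+1}=\bar W_k^{1-\gamma}\nabla_\phi\hat J_k(\bar\phi_k)^\top\bar\sigma^{\phi,2}_k\sqrt\delta\tilde Z_{k+1}$, $\Psi^3_{k+1}=(1-\gamma)\bar W_k^{-\gamma}\hat J_k(\bar\phi_k)\Pi_k^\top\bar\sigma_k\sqrt\delta Z_{k+1}$, and $M_1=\sum_{k=0}^{K-1}\beta^{k\delta}[\Psi^1_{k+1}+\Psi^2_{k+1}+\Psi^3_{k+1}]$. For $k\ge1$ let $\breve\Psi^1_{k+1}=\big[\bar W_k^{1-\gamma}+(1-\gamma)\bar W_k^{-\gamma}\big((\bar R_k-R_f\mathbf{1}_n)^\top(\Pi_{k-1}-\bar\Pi_{k-1})-(C_{k-1}-\bar C_{k-1})\big)\big]\nabla_\phi\hat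 J_k(\bar\phi_k)^\top\bar\sigma^{\phi,1}_k\sqrt\delta Z_{k+1}$ and $\breve\Psi^2_{k+1}$ the same with $\bar\sigma^{\phi,2}_k\sqrt\delta\tilde Z_{k+1}$ in place of $\bar\sigma^{\phi,1}_k\sqrt\delta Z_{k+1}$; for $k=0$ let $\breve\Psi^i_1=\Psi^i_1$. Then $M_2=\sum_{k=0}^{K-1}\beta^{k\delta}[\breve\Psi^1_{k+1}+\breve\Psi^2_{k+1}+\Psi^3_{k+1}]$. *)

theory Defs
  imports "HOL-Probability.Probability"
begin

text \<open>Discrete-time portfolio model. Index types: 'n = risky assets, 'm = market state,
  'd = extra noise dimension. Matrices in R^{p x q} are rendered as real^'q^'p.\<close>

record ('n, 'm, 'd) market =
  horizon :: nat
  dt      :: real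
  rfree   :: real
  muphi   :: "nat \<Rightarrow> real^'m \<Rightarrow> real^'m"
  sigphi1 :: "nat \<Rightarrow> real^'m \<Rightarrow> real^'n^'m"
  sigphi2 :: "nat \<Rightarrow> real^'m \<Rightarrow> real^'d^'m"
  drift   :: "nat \<Rightarrow> real^'m \<Rightarrow> real^'n"
  vol     :: "nat \<Rightarrow> real^'m \<Rightarrow> real^'n^'n"

definition Rf :: "('n::finite, 'm::finite, 'd::finite) market \<Rightarrow> real" where
  "Rf P = 1 + rfree P * dt P"

definition gauss_vec :: "(real^'i::finite) measure" where
  "gauss_vec = distr (PiM UNIV (\<lambda>_::'i. density lborel std_normal_density)) borel vec_lambda"

text \<open>Sample points: omega k = (Z_k, Ztilde_k) for k = 1..K (i.i.d.).\<close>
type_synonym ('n, 'd) sample = "nat \<Rightarrow> (real^'n) \<times> (real^'d)"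

definition noise_space :: "nat \<Rightarrow> ('n::finite, 'd::finite) sample measure" where
  "noise_space K = PiM {1..K} (\<lambda>_. gauss_vec \<Otimes>\<^sub>M gauss_vec)"

definition filt :: "nat \<Rightarrow> nat \<Rightarrow> ('n::finite, 'd::finite) sample measure" where
  "filt K k = vimage_algebra (space (noise_space K)) (\<lambda>\<omega>. restrict \<omega> {1..k})
      (PiM {1..k} (\<lambda>_. gauss_vec \<Otimes>\<^sub>M gauss_vec))"

fun state :: "('n::finite, 'm::finite, 'd::finite) market \<Rightarrow> real^'m \<Rightarrow> ('n, 'd) sample \<Rightarrow> nat \<Rightarrow> real^'m" where
  "state P \<phi>0 \<omega> 0 = \<phi>0"
| "state P \<phi>0 \<omega> (Suc k) =
     (let \<phi> = state P \<phi>0 \<omega> k; \<delta> = dt P in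
      \<phi> + \<delta> *\<^sub>R muphi P k \<phi> + sqrt \<delta> *\<^sub>R (sigphi1 P k \<phi> *v fst (\<omega> (Suc k)))
        + sqrt \<delta> *\<^sub>R (sigphi2 P k \<phi> *v snd (\<omega> (Suc k))))"

text \<open>Gross returns R_k (k >= 1); the value at k = 0 is unused.\<close>
fun ret :: "('n::finite, 'm::finite, 'd::finite) market \<Rightarrow> real^'m \<Rightarrow> ('n, 'd) sample \<Rightarrow> nat \<Rightarrow> real^'n" where
  "ret P \<phi>0 \<omega> 0 = 0"
| "ret P \<phi>0 \<omega> (Suc k) =
     (let \<phi> = state P \<phi>0 \<omega> k; \<delta> = dt P in
      (\<chi> i. exp ((drift P k \<phi> $ i - (\<Sum>j\<in>UNIV. (vol P k \<phi> $ i $ j)\<^sup>2) / 2) * \<delta>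
                 + sqrt \<delta> * ((vol P k \<phi> *v fst (\<omega> (Suc k))) $ i))))"

text \<open>A control sequence: a k omega = (Pi_k, C_k).\<close>
type_synonym ('n, 'd) policy = "nat \<Rightarrow> ('n, 'd) sample \<Rightarrow> (real^'n) \<times> real"

fun wealth :: "('n::finite, 'm::finite, 'd::finite) market \<Rightarrow> real^'m \<Rightarrow> real \<Rightarrow> ('n, 'd) policy
                 \<Rightarrow> ('n, 'd) sample \<Rightarrow> nat \<Rightarrow> real" where
  "wealth P \<phi>0 W0 a \<omega> 0 = W0"
| "wealth P \<phi>0 W0 a \<omega> (Suc k) =
     wealth P \<phi>0 W0 a \<omega> k * Rf P
     + (\<Sum>i\<in>UNIV. (ret P \<phi>0 \<omega> (Suc k) $ i - Rf P) * fst (a k \<omega>) $ i) - snd (a k \<omega>)"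

definition feasible_path :: "('n::finite, 'm::finite, 'd::finite) market \<Rightarrow> real^'m \<Rightarrow> real
                 \<Rightarrow> ('n, 'd) policy \<Rightarrow> ('n, 'd) sample \<Rightarrow> bool" where
  "feasible_path P \<phi>0 W0 a \<omega> \<longleftrightarrow>
     (\<forall>k < horizon P. (\<forall>i. fst (a k \<omega>) $ i \<ge> 0) \<and> snd (a k \<omega>) \<ge> 0 \<and>
        snd (a k \<omega>) \<le> Rf P * (wealth P \<phi>0 W0 a \<omega> k - (\<Sum>i\<in>UNIV. fst (a k \<omega>) $ i)))"

definition Adm :: "('n::finite, 'm::finite, 'd::finite) market \<Rightarrow> real^'m \<Rightarrow> real \<Rightarrow> ('n, 'd) policy set" where
  "Adm P \<phi>0 W0 = {a. \<forall>\<omega>\<in>space (noise_space (horizon P)). feasible_path P \<phi>0 W0 a \<omega>}"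

definition AdmG :: "('n::finite, 'm::finite, 'd::finite) market \<Rightarrow> real^'m \<Rightarrow> real \<Rightarrow> ('n, 'd) policy set" where
  "AdmG P \<phi>0 W0 = {a \<in> Adm P \<phi>0 W0.
      \<forall>k < horizon P. a k \<in> measurable (filt (horizon P) k) (borel :: ((real^'n) \<times> real) measure)}"

definition U :: "real \<Rightarrow> real \<Rightarrow> real" where
  "U \<gamma> x = x powr (1 - \<gamma>) / (1 - \<gamma>)"

definition reward :: "('n::finite, 'm::finite, 'd::finite) market \<Rightarrow> real \<Rightarrow> real \<Rightarrow> real
     \<Rightarrow> real^'m \<Rightarrow> real \<Rightarrow> ('n, 'd) policy \<Rightarrow> ('n, 'd) sample \<Rightarrow> real" where
  "reward P \<alpha> \<beta> \<gamma> \<phi>0 W0 a \<omega> =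
     (\<Sum>k<horizon P. \<alpha> * \<beta> powr (real k * dt P) * U \<gamma> (snd (a k \<omega>)) * dt P)
     + (1 - \<alpha>) * \<beta> powr (real (horizon P) * dt P) * U \<gamma> (wealth P \<phi>0 W0 a \<omega> (horizon P))"

definition penalty1 :: "('n::finite, 'm::finite, 'd::finite) market \<Rightarrow> real \<Rightarrow> real
     \<Rightarrow> (nat \<Rightarrow> real^'m \<Rightarrow> real) \<Rightarrow> (nat \<Rightarrow> real^'m \<Rightarrow> real^'m) \<Rightarrow> ('n, 'd) policy
     \<Rightarrow> real^'m \<Rightarrow> real \<Rightarrow> ('n, 'd) policy \<Rightarrow> ('n, 'd) sample \<Rightarrow> real" where
  "penalty1 P \<beta> \<gamma> J gJ ahat \<phi>0 W0 a \<omega> =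
     (\<Sum>k<horizon P.
        (let \<delta> = dt P; \<phi> = state P \<phi>0 \<omega> k; Wb = wealth P \<phi>0 W0 ahat \<omega> k;
             z = fst (\<omega> (Suc k)); zt = snd (\<omega> (Suc k));
             \<Psi>1 = Wb powr (1 - \<gamma>) * (gJ k \<phi> \<bullet> (sigphi1 P k \<phi> *v (sqrt \<delta> *\<^sub>R z)));
             \<Psi>2 = Wb powr (1 - \<gamma>) * (gJ k \<phi> \<bullet> (sigphi2 P k \<phi> *v (sqrt \<delta> *\<^sub>R zt)));
             \<Psi>3 = (1 - \<gamma>) * Wb powr (- \<gamma>) * J k \<phi> * (fst (a k \<omega>) \<bullet> (vol P k \<phi> *v (sqrt \<delta> *\<^sub>R z)))
         in \<beta> powr (real k * \<delta>) * (\<Psi>1 + \<Psi>2 + \<Psi>3)))"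

definition penalty2 :: "('n::finite, 'm::finite, 'd::finite) market \<Rightarrow> real \<Rightarrow> real
     \<Rightarrow> (nat \<Rightarrow> real^'m \<Rightarrow> real) \<Rightarrow> (nat \<Rightarrow> real^'m \<Rightarrow> real^'m) \<Rightarrow> ('n, 'd) policy
     \<Rightarrow> real^'m \<Rightarrow> real \<Rightarrow> ('n, 'd) policy \<Rightarrow> ('n, 'd) sample \<Rightarrow> real" where
  "penalty2 P \<beta> \<gamma> J gJ ahat \<phi>0 W0 a \<omega> =
     (\<Sum>k<horizon P.
        (let \<delta> = dt P; \<phi> = state P \<phi>0 \<omega> k; Wb = wealth P \<phi>0 W0 ahat \<omega> k;
             z = fst (\<omega> (Suc k)); zt = snd (\<omega> (Suc k));
             fac = (if k = 0 then Wb powr (1 - \<gamma>)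
                    else Wb powr (1 - \<gamma>) + (1 - \<gamma>) * Wb powr (- \<gamma>) *
                      ((\<Sum>i\<in>UNIV. (ret P \<phi>0 \<omega> k $ i - Rf P) *
                           (fst (a (k - 1) \<omega>) $ i - fst (ahat (k - 1) \<omega>) $ i))
                       - (snd (a (k - 1) \<omega>) - snd (ahat (k - 1) \<omega>))));
             \<Psi>1 = fac * (gJ k \<phi> \<bullet> (sigphi1 P k \<phi> *v (sqrt \<delta> *\<^sub>R z)));
             \<Psi>2 = fac * (gJ k \<phi> \<bullet> (sigphi2 P k \<phi> *v (sqrt \<delta> *\<^sub>R zt)));
             \<Psi>3 = (1 - \<gamma>) * Wb powr (- \<gamma>) * J k \<phi> * (fst (a k \<omega>) \<bullet> (vol P k \<phi> *v (sqrt \<delta> *\<^sub>R z)))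
         in \<beta> powr (real k * \<delta>) * (\<Psi>1 + \<Psi>2 + \<Psi>3)))"

text \<open>Dual feasibility at (phi0, W0): E[M(a,Z,Zt)] <= 0 for every a in A_G, with the
  expectation understood in the extended sense E[M^+] <= E[M^-].\<close>
definition dual_feasible :: "('n::finite, 'm::finite, 'd::finite) market \<Rightarrow> real^'m \<Rightarrow> real
     \<Rightarrow> (('n, 'd) policy \<Rightarrow> ('n, 'd) sample \<Rightarrow> real) \<Rightarrow> bool" where
  "dual_feasible P \<phi>0 W0 M \<longleftrightarrow>
     (\<forall>a \<in> AdmG P \<phi>0 W0.
        (\<integral>\<^sup>+\<omega>. ennreal (M a \<omega>) \<partial>noise_space (horizon P))
          \<le> (\<integral>\<^sup>+\<omega>. ennreal (- M a \<omega>) \<partial>noise_space (horizon P)))"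

definition H0 :: "('n::finite, 'm::finite, 'd::finite) market \<Rightarrow> real \<Rightarrow> real \<Rightarrow> real
     \<Rightarrow> real^'m \<Rightarrow> real \<Rightarrow> real" where
  "H0 P \<alpha> \<beta> \<gamma> \<phi>0 W0 =
     (SUP a \<in> AdmG P \<phi>0 W0. \<integral>\<omega>. reward P \<alpha> \<beta> \<gamma> \<phi>0 W0 a \<omega> \<partial>noise_space (horizon P))"

definition inner_sup :: "('n::finite, 'm::finite, 'd::finite) market \<Rightarrow> real \<Rightarrow> real \<Rightarrow> real
     \<Rightarrow> real^'m \<Rightarrow> real \<Rightarrow> (('n, 'd) policy \<Rightarrow> ('n, 'd) sample \<Rightarrow> real) \<Rightarrow> ('n, 'd) sample \<Rightarrow> real" where
  "inner_sup P \<alpha> \<beta> \<gamma> \<phi>0 W0 M \<omega> =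
     (SUP a \<in> Adm P \<phi>0 W0. reward P \<alpha> \<beta> \<gamma> \<phi>0 W0 a \<omega> - M a \<omega>)"

definition LM :: "('n::finite, 'm::finite, 'd::finite) market \<Rightarrow> real \<Rightarrow> real \<Rightarrow> real
     \<Rightarrow> real^'m \<Rightarrow> real \<Rightarrow> (('n, 'd) policy \<Rightarrow> ('n, 'd) sample \<Rightarrow> real) \<Rightarrow> real" where
  "LM P \<alpha> \<beta> \<gamma> \<phi>0 W0 M = (\<integral>\<omega>. inner_sup P \<alpha> \<beta> \<gamma> \<phi>0 W0 M \<omega> \<partial>noise_space (horizon P))"

definition dual_bound_regular :: "('n::finite, 'm::finite, 'd::finite) market \<Rightarrow> real \<Rightarrow> real \<Rightarrow> real
     \<Rightarrow> real^'m \<Rightarrow> real \<Rightarrow> (('n, 'd) policy \<Rightarrow> ('n, 'd) sample \<Rightarrow> real) \<Rightarrow> bool" where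
  "dual_bound_regular P \<alpha> \<beta> \<gamma> \<phi>0 W0 M \<longleftrightarrow>
     (\<forall>a \<in> AdmG P \<phi>0 W0. integrable (noise_space (horizon P)) (reward P \<alpha> \<beta> \<gamma> \<phi>0 W0 a)) \<and>
     (\<forall>\<omega> \<in> space (noise_space (horizon P)).
        bdd_above ((\<lambda>a. reward P \<alpha> \<beta> \<gamma> \<phi>0 W0 a \<omega> - M a \<omega>) ` Adm P \<phi>0 W0)) \<and>
     integrable (noise_space (horizon P)) (inner_sup P \<alpha> \<beta> \<gamma> \<phi>0 W0 M)"

end

theory Submission
  imports Defs
begin

text \<open>Both penalties are discrete stochastic integrals, sums over \<open>k\<close> of
  \<open>\<theta>\<^sub>k \<bullet> \<omega>\<^sub>k\<^sub>+\<^sub>1\<close> where \<open>\<omega>\<^sub>k\<^sub>+\<^sub>1 = (Z\<^sub>k\<^sub>+\<^sub>1, Ztilde\<^sub>k\<^sub>+\<^sub>1)\<close>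
  is the noise revealed at time \<open>k + 1\<close>. The integrands \<open>\<theta>\<^sub>k\<close> are built from
  the market state, the reference wealth and the controls up to time \<open>k\<close>, so they are
  \<open>G\<^sub>k\<close>-measurable as soon as the control is non-anticipative. Integrating the
  fresh centred Gaussian increment out first (Fubini on the product of the noise laws) shows, by
  induction on the number of terms, that the positive part of such a sum has at most the
  expectation of its negative part. Stated this way no integrability of the penalty is needed.
  Weak duality is then pathwise: for a non-anticipative control the reward minus the penalty is
  dominated by the pathwise supremum, and the penalty has non-positive mean.\<close>

section \<open>Measurability of vectors and matrices\<close>

lemma borel_measurable_vec_nth[measurable (raw)]:
  fixes f :: "'a \<Rightarrow> ('b::euclidean_space)^'n::finite"
  assumes "f \<in> borel_measurable M"
  shows "(\<lambda>x. f x $ i) \<in> borel_measurable M"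
proof (subst borel_measurable_euclidean_space, intro ballI)
  fix b :: 'b
  have "(\<lambda>x. f x \<bullet> axis i b) \<in> borel_measurable M" using assms by measurable
  then show "(\<lambda>x. f x $ i \<bullet> b) \<in> borel_measurable M" by (simp add: inner_axis)
qed

lemma borel_measurable_vec_lambda:
  fixes f :: "'a \<Rightarrow> 'n::finite \<Rightarrow> 'b::euclidean_space"
  assumes "\<And>i. (\<lambda>x. f x i) \<in> borel_measurable M"
  shows "(\<lambda>x. \<chi> i. f x i) \<in> borel_measurable M"
proof (subst borel_measurable_euclidean_space, intro ballI)
  fix b :: "'b^'n" assume "b \<in> Basis"
  then obtain i u where "b = axis i u" "u \<in> Basis" by (auto simp: Basis_vec_def)
  moreover have "(\<lambda>x. f x i \<bullet> u) \<in> borel_measurable M" using assms by measurable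
  ultimately show "(\<lambda>x. (\<chi> i. f x i) \<bullet> b) \<in> borel_measurable M" by (simp add: inner_axis)
qed

lemma borel_measurable_matrix_vector_mult[measurable (raw)]:
  fixes A :: "'a \<Rightarrow> real^'n::finite^'m::finite" and v :: "'a \<Rightarrow> real^'n"
  assumes [measurable]: "A \<in> borel_measurable M" "v \<in> borel_measurable M"
  shows "(\<lambda>x. A x *v v x) \<in> borel_measurable M"
  unfolding matrix_vector_mult_def by (intro borel_measurable_vec_lambda) measurable

lemma borel_measurable_vector_matrix_mult[measurable (raw)]:
  fixes A :: "'a \<Rightarrow> real^'n::finite^'m::finite" and v :: "'a \<Rightarrow> real^'m"
  assumes [measurable]: "A \<in> borel_measurable M" "v \<in> borel_measurable M"
  shows "(\<lambda>x. v x v* A x) \<in> borel_measurable M"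
  unfolding vector_matrix_mult_def by (intro borel_measurable_vec_lambda) measurable

section \<open>The Gaussian noise\<close>

lemma vec_lambda_measurable_std_normal:
  "(vec_lambda :: ('i::finite \<Rightarrow> real) \<Rightarrow> real^'i)
     \<in> borel_measurable (PiM UNIV (\<lambda>_. std_normal_distribution))"
proof -
  have "(\<lambda>x. x i) \<in> borel_measurable (PiM UNIV (\<lambda>_::'i. std_normal_distribution))" for i
    using measurable_component_singleton[of i UNIV "\<lambda>_. std_normal_distribution"]
    by (simp cong: measurable_cong_sets)
  from borel_measurable_vec_lambda[of "\<lambda>x i. x i", OF this] show ?thesis by simp
qed

lemma prob_space_gauss_vec: "prob_space (gauss_vec :: (real^'i::finite) measure)"
  unfolding gauss_vec_def
  by (intro prob_space.prob_space_distr vec_lambda_measurable_std_normal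
        prob_space_PiM prob_space_normal_density) simp

lemma integrable_gauss_vec_nth: "integrable gauss_vec (\<lambda>x::real^'i::finite. x $ i)"
  and integral_gauss_vec_nth: "(\<integral>x. x $ i \<partial>(gauss_vec :: (real^'i) measure)) = 0"
proof -
  let ?N = "std_normal_distribution" and ?\<Pi> = "PiM UNIV (\<lambda>_::'i. std_normal_distribution)"
  interpret product_prob_space "\<lambda>_::'i. ?N" UNIV
    by (intro product_prob_spaceI prob_space_normal_density) simp
  have component: "(\<lambda>\<omega>. \<omega> i) \<in> measurable ?\<Pi> ?N"
    by (rule measurable_component_singleton) simp
  have distr_component: "distr ?\<Pi> ?N (\<lambda>\<omega>. \<omega> i) = ?N"
    using PiM_component[of i] by simp
  have "integrable ?N (\<lambda>x. x)"
    using integrable_std_normal_moment[of 1] by (subst integrable_density) auto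
  then have "integrable ?\<Pi> (\<lambda>\<omega>. \<omega> i)"
    by (subst (asm) distr_component[symmetric]) (simp add: integrable_distr_eq[OF component])
  then show "integrable gauss_vec (\<lambda>x::real^'i. x $ i)"
    unfolding gauss_vec_def by (simp add: integrable_distr_eq[OF vec_lambda_measurable_std_normal])
  have "integral\<^sup>L ?N (\<lambda>x. x) = 0"
    using integral_std_normal_moment_odd[of 0] by (subst integral_density) auto
  then have "integral\<^sup>L ?\<Pi> (\<lambda>\<omega>. \<omega> i) = 0"
    by (subst (asm) distr_component[symmetric]) (simp add: integral_distr[OF component])
  then show "(\<integral>x. x $ i \<partial>(gauss_vec :: (real^'i) measure)) = 0"
    unfolding gauss_vec_def by (simp add: integral_distr[OF vec_lambda_measurable_std_normal])
qed

lemma (in prob_space) distr_pair_snd: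
  assumes "sigma_finite_measure N"
  shows "distr (M \<Otimes>\<^sub>M N) N snd = N"
proof (intro measure_eqI)
  interpret N: sigma_finite_measure N by fact
  fix A assume A: "A \<in> sets (distr (M \<Otimes>\<^sub>M N) N snd)"
  then have "emeasure (distr (M \<Otimes>\<^sub>M N) N snd) A = emeasure (M \<Otimes>\<^sub>M N) (space M \<times> A)"
    by (auto simp: emeasure_distr space_pair_measure dest: sets.sets_into_space
             intro!: arg_cong2[where f=emeasure])
  with A show "emeasure (distr (M \<Otimes>\<^sub>M N) N snd) A = emeasure N A"
    by (simp add: N.emeasure_pair_measure_Times emeasure_space_1)
qed simp

lemma (in pair_prob_space)
  fixes f :: "_ \<Rightarrow> real" and g :: "_ \<Rightarrow> real"
  assumes f: "integrable M1 f" and g: "integrable M2 g"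
  shows integrable_fst_plus_snd: "integrable (M1 \<Otimes>\<^sub>M M2) (\<lambda>y. f (fst y) + g (snd y))"
    and integral_fst_plus_snd:
      "(\<integral>y. f (fst y) + g (snd y) \<partial>(M1 \<Otimes>\<^sub>M M2)) = integral\<^sup>L M1 f + integral\<^sup>L M2 g"
proof -
  have distr_fst: "distr (M1 \<Otimes>\<^sub>M M2) M1 fst = M1"
    by (rule M2.distr_pair_fst)
  have distr_snd: "distr (M1 \<Otimes>\<^sub>M M2) M2 snd = M2"
    by (rule M1.distr_pair_snd) (rule M2.sigma_finite_measure_axioms)
  note f_meas = borel_measurable_integrable[OF f] and g_meas = borel_measurable_integrable[OF g]
  have "integrable (M1 \<Otimes>\<^sub>M M2) (\<lambda>y. f (fst y))" "integrable (M1 \<Otimes>\<^sub>M M2) (\<lambda>y. g (snd y))"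
    using f g
    by (simp_all add: integrable_distr_eq[OF measurable_fst f_meas, symmetric]
        integrable_distr_eq[OF measurable_snd g_meas, symmetric] distr_fst distr_snd)
  moreover have "(\<integral>y. f (fst y) \<partial>(M1 \<Otimes>\<^sub>M M2)) = integral\<^sup>L M1 f"
      "(\<integral>y. g (snd y) \<partial>(M1 \<Otimes>\<^sub>M M2)) = integral\<^sup>L M2 g"
    by (simp_all add: integral_distr[OF measurable_fst f_meas, symmetric]
        integral_distr[OF measurable_snd g_meas, symmetric] distr_fst distr_snd)
  ultimately show "integrable (M1 \<Otimes>\<^sub>M M2) (\<lambda>y. f (fst y) + g (snd y))"
    and "(\<integral>y. f (fst y) + g (snd y) \<partial>(M1 \<Otimes>\<^sub>M M2)) = integral\<^sup>L M1 f + integral\<^sup>L M2 g"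
    by simp_all
qed

lemma integrable_gauss_vec_inner: "integrable gauss_vec (\<lambda>x::real^'i::finite. c \<bullet> x)"
  and integral_gauss_vec_inner: "(\<integral>x. c \<bullet> x \<partial>(gauss_vec :: (real^'i) measure)) = 0"
  by (simp_all add: inner_vec_def integrable_gauss_vec_nth integral_gauss_vec_nth integral_sum
      integrable_sum integrable_mult_right)

lemma
  fixes c :: "real^'n::finite" and d :: "real^'d::finite"
  shows integrable_gauss_pair_inner:
      "integrable (gauss_vec \<Otimes>\<^sub>M gauss_vec) (\<lambda>y::(real^'n) \<times> (real^'d). c \<bullet> fst y + d \<bullet> snd y)"
    and integral_gauss_pair_inner:
      "(\<integral>y. c \<bullet> fst y + d \<bullet> snd y \<partial>(gauss_vec \<Otimes>\<^sub>M gauss_vec :: ((real^'n) \<times> (real^'d)) measure)) = 0"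
proof -
  interpret pair_prob_space "gauss_vec :: (real^'n) measure" "gauss_vec :: (real^'d) measure"
    by (intro pair_prob_space.intro pair_sigma_finite.intro prob_space_gauss_vec
          prob_space_imp_sigma_finite)
  show "integrable (gauss_vec \<Otimes>\<^sub>M gauss_vec) (\<lambda>y::(real^'n) \<times> (real^'d). c \<bullet> fst y + d \<bullet> snd y)"
    by (intro integrable_fst_plus_snd integrable_gauss_vec_inner)
  show "(\<integral>y. c \<bullet> fst y + d \<bullet> snd y \<partial>(gauss_vec \<Otimes>\<^sub>M gauss_vec :: ((real^'n) \<times> (real^'d)) measure)) = 0"
    by (simp add: integral_fst_plus_snd integrable_gauss_vec_inner integral_gauss_vec_inner)
qed

section \<open>Martingale sums on product spaces\<close>

lemma ennreal_add_diff_eq_max: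
  assumes "0 \<le> p" "0 \<le> q"
  shows "ennreal p + ennreal (q - p) = ennreal (max p q)"
  using assms by (cases "p \<le> q") (simp_all add: ennreal_plus[symmetric] ennreal_neg)

lemma
  fixes h :: "'a \<Rightarrow> real"
  assumes "integrable M h"
  shows nn_integral_parts_balance:
      "(\<integral>\<^sup>+y. ennreal (h y) \<partial>M) + ennreal (- integral\<^sup>L M h)
         = (\<integral>\<^sup>+y. ennreal (- h y) \<partial>M) + ennreal (integral\<^sup>L M h)"
    and ennreal_neg_integral_le_nn_integral:
      "ennreal (- integral\<^sup>L M h) \<le> (\<integral>\<^sup>+y. ennreal (- h y) \<partial>M)"
proof -
  define p where "p = enn2real (\<integral>\<^sup>+y. ennreal (h y) \<partial>M)"
  define q where "q = enn2real (\<integral>\<^sup>+y. ennreal (- h y) \<partial>M)"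
  have finite: "(\<integral>\<^sup>+y. ennreal (h y) \<partial>M) = ennreal p" "(\<integral>\<^sup>+y. ennreal (- h y) \<partial>M) = ennreal q"
    using assms unfolding real_integrable_def p_def q_def by (auto simp: ennreal_enn2real_if)
  have "integral\<^sup>L M h = p - q"
    unfolding real_lebesgue_integral_def[OF assms] p_def q_def ..
  moreover have "0 \<le> p" "0 \<le> q" unfolding p_def q_def by simp_all
  ultimately show "(\<integral>\<^sup>+y. ennreal (h y) \<partial>M) + ennreal (- integral\<^sup>L M h)
      = (\<integral>\<^sup>+y. ennreal (- h y) \<partial>M) + ennreal (integral\<^sup>L M h)"
    and "ennreal (- integral\<^sup>L M h) \<le> (\<integral>\<^sup>+y. ennreal (- h y) \<partial>M)"
    unfolding finite by (simp_all add: ennreal_add_diff_eq_max max.commute ennreal_leI)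
qed

lemma
  fixes G :: "'a \<Rightarrow> real"
  assumes "prob_space N" "integrable N G" "integral\<^sup>L N G = 0"
  shows nn_integral_add_centred_balance:
      "(\<integral>\<^sup>+y. ennreal (c + G y) \<partial>N) + ennreal (- c) = (\<integral>\<^sup>+y. ennreal (- (c + G y)) \<partial>N) + ennreal c"
    and ennreal_neg_le_nn_integral_add_centred: "ennreal (- c) \<le> (\<integral>\<^sup>+y. ennreal (- (c + G y)) \<partial>N)"
proof -
  interpret prob_space N by fact
  have "integrable N (\<lambda>y. c + G y)" "integral\<^sup>L N (\<lambda>y. c + G y) = c"
    using assms(2,3) by (simp_all add: prob_space)
  with nn_integral_parts_balance ennreal_neg_integral_le_nn_integral
  show "(\<integral>\<^sup>+y. ennreal (c + G y) \<partial>N) + ennreal (- c) = (\<integral>\<^sup>+y. ennreal (- (c + G y)) \<partial>N) + ennreal c"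
    and "ennreal (- c) \<le> (\<integral>\<^sup>+y. ennreal (- (c + G y)) \<partial>N)"
    by metis+
qed

text \<open>The balance hypothesis is \<open>E[X\<^sup>+] - E[X\<^sup>-] = F\<close> written without
  subtraction, as \<open>ennreal\<close> arithmetic requires.\<close>

lemma nn_integral_le_by_balance:
  fixes F :: "'a \<Rightarrow> real"
  assumes [measurable]: "F \<in> borel_measurable M" "p \<in> borel_measurable M" "q \<in> borel_measurable M"
    and balance: "\<And>x. x \<in> space M \<Longrightarrow> p x + ennreal (- F x) = q x + ennreal (F x)"
    and neg_le: "\<And>x. x \<in> space M \<Longrightarrow> ennreal (- F x) \<le> q x"
    and le: "(\<integral>\<^sup>+x. ennreal (F x) \<partial>M) \<le> (\<integral>\<^sup>+x. ennreal (- F x) \<partial>M)"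
  shows "(\<integral>\<^sup>+x. p x \<partial>M) \<le> (\<integral>\<^sup>+x. q x \<partial>M)"
proof (cases "(\<integral>\<^sup>+x. q x \<partial>M) = \<infinity>")
  case False
  have "(\<integral>\<^sup>+x. ennreal (- F x) \<partial>M) \<le> (\<integral>\<^sup>+x. q x \<partial>M)"
    by (intro nn_integral_mono neg_le)
  with False have finite: "(\<integral>\<^sup>+x. ennreal (- F x) \<partial>M) \<noteq> \<infinity>"
    by (auto simp: top_unique)
  have "(\<integral>\<^sup>+x. ennreal (- F x) \<partial>M) + (\<integral>\<^sup>+x. p x \<partial>M) = (\<integral>\<^sup>+x. p x + ennreal (- F x) \<partial>M)"
    by (subst nn_integral_add) (auto simp: add.commute)
  also have "\<dots> = (\<integral>\<^sup>+x. q x + ennreal (F x) \<partial>M)"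
    by (intro nn_integral_cong balance)
  also have "\<dots> = (\<integral>\<^sup>+x. q x \<partial>M) + (\<integral>\<^sup>+x. ennreal (F x) \<partial>M)"
    by (subst nn_integral_add) auto
  also have "\<dots> \<le> (\<integral>\<^sup>+x. q x \<partial>M) + (\<integral>\<^sup>+x. ennreal (- F x) \<partial>M)"
    using le by (rule add_left_mono)
  finally show ?thesis
    using finite by (simp add: add.commute ennreal_add_left_cancel_le)
qed simp

definition determined_by_first :: "nat \<Rightarrow> (nat \<Rightarrow> 'a) set \<Rightarrow> ((nat \<Rightarrow> 'a) \<Rightarrow> 'b) \<Rightarrow> bool" where
  "determined_by_first k \<Omega> f \<longleftrightarrow> (\<forall>\<omega>\<in>\<Omega>. \<forall>\<omega>'\<in>\<Omega>. (\<forall>j\<in>{1..k}. \<omega> j = \<omega>' j) \<longrightarrow> f \<omega> = f \<omega>')"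

lemma determined_by_firstD:
  assumes "determined_by_first k \<Omega> f" "\<omega> \<in> \<Omega>" "\<omega>' \<in> \<Omega>" "\<And>j. j \<in> {1..k} \<Longrightarrow> \<omega> j = \<omega>' j"
  shows "f \<omega> = f \<omega>'"
  using assms unfolding determined_by_first_def by blast

lemma nn_integral_add_centred_increment_le:
  fixes N :: "'a measure" and i :: 'i and I :: "'i set" and S G :: "('i \<Rightarrow> 'a) \<Rightarrow> real"
  defines "\<Omega> \<equiv> space (PiM (insert i I) (\<lambda>_. N))"
  assumes N: "prob_space N" and I: "finite I" "i \<notin> I"
    and [measurable]: "S \<in> borel_measurable (PiM (insert i I) (\<lambda>_. N))"
      "G \<in> borel_measurable (PiM (insert i I) (\<lambda>_. N))"
    and S_fresh: "\<And>x y. x \<in> \<Omega> \<Longrightarrow> y \<in> space N \<Longrightarrow> S (x(i := y)) = S x"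
    and G_integrable: "\<And>x. x \<in> \<Omega> \<Longrightarrow> integrable N (\<lambda>y. G (x(i := y)))"
    and G_centred: "\<And>x. x \<in> \<Omega> \<Longrightarrow> (\<integral>y. G (x(i := y)) \<partial>N) = 0"
    and S_le: "(\<integral>\<^sup>+x. ennreal (S x) \<partial>PiM (insert i I) (\<lambda>_. N))
                 \<le> (\<integral>\<^sup>+x. ennreal (- S x) \<partial>PiM (insert i I) (\<lambda>_. N))"
  shows "(\<integral>\<^sup>+x. ennreal (S x + G x) \<partial>PiM (insert i I) (\<lambda>_. N))
           \<le> (\<integral>\<^sup>+x. ennreal (- (S x + G x)) \<partial>PiM (insert i I) (\<lambda>_. N))"
proof -
  interpret N: prob_space N by fact
  interpret product_sigma_finite "\<lambda>_. N"
    by (simp add: product_sigma_finite_def N.sigma_finite_measure_axioms)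
  obtain y0 where y0: "y0 \<in> space N"
    using N.not_empty by blast
  have upd_in_\<Omega>: "x(i := y) \<in> \<Omega>" if "x \<in> space (PiM I (\<lambda>_. N))" "y \<in> space N" for x y
    using that unfolding \<Omega>_def by (auto simp: space_PiM PiE_iff extensional_def)
  have [measurable]: "(\<lambda>x. x(i := y0)) \<in> measurable (PiM I (\<lambda>_. N)) (PiM (insert i I) (\<lambda>_. N))"
    using y0 by (intro measurable_fun_upd[where J=I]) auto
  define F where "F x = S (x(i := y0))" for x
  have F_measurable[measurable]: "F \<in> borel_measurable (PiM I (\<lambda>_. N))"
    unfolding F_def[abs_def] by measurable
  have S_upd: "S (x(i := y)) = F x" if "x \<in> space (PiM I (\<lambda>_. N))" "y \<in> space N" for x y
    using S_fresh[OF upd_in_\<Omega>[OF that(1) y0] that(2)] by (simp add: F_def)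
  have balance: "(\<integral>\<^sup>+y. ennreal (S (x(i := y)) + G (x(i := y))) \<partial>N) + ennreal (- F x)
      = (\<integral>\<^sup>+y. ennreal (- (S (x(i := y)) + G (x(i := y)))) \<partial>N) + ennreal (F x)"
    and neg_le: "ennreal (- F x) \<le> (\<integral>\<^sup>+y. ennreal (- (S (x(i := y)) + G (x(i := y)))) \<partial>N)"
    if x: "x \<in> space (PiM I (\<lambda>_. N))" for x
    using nn_integral_add_centred_balance[OF N G_integrable G_centred, of "x(i := y0)" "F x"]
      ennreal_neg_le_nn_integral_add_centred[OF N G_integrable G_centred, of "x(i := y0)" "F x"]
      upd_in_\<Omega>[OF x y0] S_upd[OF x]
    by (simp_all cong: nn_integral_cong)
  have integrate_fresh:
      "(\<integral>\<^sup>+x. f (S x) \<partial>PiM (insert i I) (\<lambda>_. N)) = (\<integral>\<^sup>+x. f (F x) \<partial>PiM I (\<lambda>_. N))"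
    if [measurable]: "f \<in> borel_measurable borel" for f :: "real \<Rightarrow> ennreal"
  proof -
    have "(\<integral>\<^sup>+y. f (S (x(i := y))) \<partial>N) = f (F x)" if "x \<in> space (PiM I (\<lambda>_. N))" for x
      using that by (simp add: S_upd N.emeasure_space_1 cong: nn_integral_cong)
    then show ?thesis
      by (subst product_nn_integral_insert[OF I]) (auto intro!: nn_integral_cong)
  qed
  have "(\<integral>\<^sup>+x. ennreal (F x) \<partial>PiM I (\<lambda>_. N)) \<le> (\<integral>\<^sup>+x. ennreal (- F x) \<partial>PiM I (\<lambda>_. N))"
    using S_le integrate_fresh[of ennreal] integrate_fresh[of "\<lambda>r. ennreal (- r)"] by simp
  from nn_integral_le_by_balance[OF F_measurable _ _ balance neg_le this] show ?thesis
    by (simp add: product_nn_integral_insert[OF I])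
qed

lemma nn_integral_martingale_sum_le:
  fixes N :: "'a measure" and g :: "nat \<Rightarrow> (nat \<Rightarrow> 'a) \<Rightarrow> real" and K n :: nat
  defines "\<Omega> \<equiv> space (PiM {1..K} (\<lambda>_. N))"
  assumes N: "prob_space N"
    and g_measurable: "\<And>k. k < K \<Longrightarrow> g k \<in> borel_measurable (PiM {1..K} (\<lambda>_. N))"
    and g_adapted: "\<And>k. k < K \<Longrightarrow> determined_by_first (Suc k) \<Omega> (g k)"
    and g_integrable: "\<And>k x. k < K \<Longrightarrow> x \<in> \<Omega> \<Longrightarrow> integrable N (\<lambda>y. g k (x(Suc k := y)))"
    and g_centred: "\<And>k x. k < K \<Longrightarrow> x \<in> \<Omega> \<Longrightarrow> (\<integral>y. g k (x(Suc k := y)) \<partial>N) = 0"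
    and "n \<le> K"
  shows "(\<integral>\<^sup>+\<omega>. ennreal (\<Sum>k<n. g k \<omega>) \<partial>PiM {1..K} (\<lambda>_. N))
           \<le> (\<integral>\<^sup>+\<omega>. ennreal (- (\<Sum>k<n. g k \<omega>)) \<partial>PiM {1..K} (\<lambda>_. N))"
  using \<open>n \<le> K\<close>
proof (induction n)
  case (Suc n)
  define I where "I = {1..K} - {Suc n}"
  have I: "{1..K} = insert (Suc n) I" "finite I" "Suc n \<notin> I"
    using Suc.prems unfolding I_def by auto
  have "(\<integral>\<^sup>+\<omega>. ennreal ((\<Sum>k<n. g k \<omega>) + g n \<omega>) \<partial>PiM (insert (Suc n) I) (\<lambda>_. N))
      \<le> (\<integral>\<^sup>+\<omega>. ennreal (- ((\<Sum>k<n. g k \<omega>) + g n \<omega>)) \<partial>PiM (insert (Suc n) I) (\<lambda>_. N))"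
  proof (rule nn_integral_add_centred_increment_le[OF N I(2,3)])
    show "(\<lambda>x. \<Sum>k<n. g k x) \<in> borel_measurable (PiM (insert (Suc n) I) (\<lambda>_. N))"
      "g n \<in> borel_measurable (PiM (insert (Suc n) I) (\<lambda>_. N))"
      using g_measurable Suc.prems unfolding I(1)[symmetric] by auto
    show "(\<integral>\<^sup>+x. ennreal (\<Sum>k<n. g k x) \<partial>PiM (insert (Suc n) I) (\<lambda>_. N))
        \<le> (\<integral>\<^sup>+x. ennreal (- (\<Sum>k<n. g k x)) \<partial>PiM (insert (Suc n) I) (\<lambda>_. N))"
      using Suc unfolding I(1)[symmetric] by simp
    fix x assume x: "x \<in> space (PiM (insert (Suc n) I) (\<lambda>_. N))"
    then have x\<Omega>: "x \<in> \<Omega>"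
      unfolding \<Omega>_def I(1) .
    show "integrable N (\<lambda>y. g n (x(Suc n := y)))" "(\<integral>y. g n (x(Suc n := y)) \<partial>N) = 0"
      using g_integrable[OF _ x\<Omega>] g_centred[OF _ x\<Omega>] Suc.prems by auto
    fix y assume "y \<in> space N"
    with x have "x(Suc n := y) \<in> \<Omega>"
      unfolding \<Omega>_def I(1) by (auto simp: space_PiM PiE_iff extensional_def)
    with x\<Omega> Suc.prems show "(\<Sum>k<n. g k (x(Suc n := y))) = (\<Sum>k<n. g k x)"
      by (intro sum.cong refl determined_by_firstD[OF g_adapted]) auto
  qed
  then show ?case
    unfolding I(1) by simp
qed simp

section \<open>The noise filtration and stochastic integrals\<close>

lemma space_noise_space: "space (noise_space K) = PiE {1..K} (\<lambda>_. UNIV)"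
  by (simp add: noise_space_def space_PiM space_pair_measure gauss_vec_def)

lemma space_filt: "space (filt K k) = space (noise_space K)"
  by (simp add: filt_def)

lemma measurable_filt_component:
  assumes "j \<in> {1..k}"
  shows "(\<lambda>\<omega>. \<omega> j) \<in> measurable (filt K k) (gauss_vec \<Otimes>\<^sub>M gauss_vec)"
proof -
  have "(\<lambda>\<omega>. restrict \<omega> {1..k}) \<in> measurable (filt K k) (PiM {1..k} (\<lambda>_. gauss_vec \<Otimes>\<^sub>M gauss_vec))"
    unfolding filt_def
    by (rule measurable_vimage_algebra1) (simp add: space_PiM space_pair_measure gauss_vec_def)
  from measurable_comp[OF this measurable_component_singleton[OF assms]] assms show ?thesis
    by (simp add: comp_def)
qed

lemma
  assumes "j \<in> {1..k}"
  shows measurable_filt_fst: "(\<lambda>\<omega>. fst (\<omega> j)) \<in> borel_measurable (filt K k)"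
    and measurable_filt_snd: "(\<lambda>\<omega>. snd (\<omega> j)) \<in> borel_measurable (filt K k)"
  using measurable_compose[OF measurable_filt_component[OF assms] measurable_fst]
    measurable_compose[OF measurable_filt_component[OF assms] measurable_snd]
  by (simp_all add: gauss_vec_def cong: measurable_cong_sets)

lemma measurable_filt_mono:
  assumes "f \<in> measurable (filt K j) M" "j \<le> k"
  shows "f \<in> measurable (filt K k) M"
proof -
  have "(\<lambda>\<omega>. restrict \<omega> {1..j}) \<in> measurable (filt K k) (PiM {1..j} (\<lambda>_. gauss_vec \<Otimes>\<^sub>M gauss_vec))"
    using \<open>j \<le> k\<close> by (intro measurable_restrict measurable_filt_component) auto
  then have "sets (filt K j) \<subseteq> sets (filt K k)"
    unfolding filt_def by (intro sets_image_in_sets) (simp_all add: filt_def)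
  then have "measurable (filt K j) M \<subseteq> measurable (filt K k) M"
    by (intro measurable_mono) (simp_all add: space_filt)
  with assms(1) show ?thesis
    by blast
qed

lemma measurable_filt_imp_noise_space:
  assumes "f \<in> measurable (filt K k) M" "k \<le> K"
  shows "f \<in> measurable (noise_space K) M"
proof -
  have "(\<lambda>\<omega>. restrict \<omega> {1..k}) \<in> measurable (noise_space K) (PiM {1..k} (\<lambda>_. gauss_vec \<Otimes>\<^sub>M gauss_vec))"
    unfolding noise_space_def using \<open>k \<le> K\<close> by (intro measurable_restrict_subset) auto
  then have "sets (filt K k) \<subseteq> sets (noise_space K)"
    unfolding filt_def by (intro sets_image_in_sets) simp_all
  then have "measurable (filt K k) M \<subseteq> measurable (noise_space K) M"
    by (intro measurable_mono) (simp_all add: space_filt)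
  with assms(1) show ?thesis
    by blast
qed

lemma determined_by_first_if_measurable_filt:
  fixes f :: "('n::finite, 'd::finite) sample \<Rightarrow> 'b::t1_space"
  assumes "f \<in> borel_measurable (filt K k)"
  shows "determined_by_first k (space (noise_space K)) f"
  unfolding determined_by_first_def
proof (intro ballI impI)
  fix \<omega> \<omega>' :: "('n, 'd) sample"
  assume \<omega>: "\<omega> \<in> space (noise_space K)" and \<omega>': "\<omega>' \<in> space (noise_space K)"
    and agree: "\<forall>j\<in>{1..k}. \<omega> j = \<omega>' j"
  have "f -` {f \<omega>} \<inter> space (filt K k) \<in> sets (filt K k)"
    by (rule measurable_sets[OF assms]) simp
  then obtain A where eq: "f -` {f \<omega>} \<inter> space (noise_space K) = (\<lambda>\<omega>. restrict \<omega> {1..k}) -` A \<inter> space (noise_space K)"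
    unfolding filt_def
    by (subst (asm) sets_vimage_algebra2) (auto simp: space_PiM space_pair_measure gauss_vec_def)
  have "restrict \<omega> {1..k} = restrict \<omega>' {1..k}"
    using agree by (auto simp: restrict_def)
  moreover have "\<omega> \<in> f -` {f \<omega>} \<inter> space (noise_space K)"
    using \<omega> by simp
  ultimately have "\<omega>' \<in> f -` {f \<omega>} \<inter> space (noise_space K)"
    using \<omega>' unfolding eq by simp
  then show "f \<omega> = f \<omega>'"
    by simp
qed

lemma
  assumes "a \<in> AdmG P \<phi>0 W0" "k < horizon P"
  shows AdmG_measurable_fst: "(\<lambda>\<omega>. fst (a k \<omega>)) \<in> borel_measurable (filt (horizon P) k)"
    and AdmG_measurable_snd: "(\<lambda>\<omega>. snd (a k \<omega>)) \<in> borel_measurable (filt (horizon P) k)"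
  using assms measurable_compose[OF _ measurable_fst] measurable_compose[OF _ measurable_snd]
  by (auto simp: AdmG_def simp flip: borel_prod)

lemma measurable_filt_fun_upd_eq:
  fixes f :: "('n::finite, 'd::finite) sample \<Rightarrow> 'b::t1_space"
  assumes "f \<in> borel_measurable (filt K k)" "x \<in> space (noise_space K)" "k < j" "j \<le> K"
  shows "f (x(j := y)) = f x"
proof (rule determined_by_firstD[OF determined_by_first_if_measurable_filt[OF assms(1)]])
  show "x(j := y) \<in> space (noise_space K)"
    using assms(2-4) by (auto simp: space_noise_space PiE_iff extensional_def)
qed (use assms in auto)

definition noise_integral :: "nat \<Rightarrow> (nat \<Rightarrow> ('n::finite, 'd::finite) sample \<Rightarrow> real^'n)
    \<Rightarrow> (nat \<Rightarrow> ('n, 'd) sample \<Rightarrow> real^'d) \<Rightarrow> ('n, 'd) sample \<Rightarrow> real" where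
  "noise_integral K c d \<omega> = (\<Sum>k<K. c k \<omega> \<bullet> fst (\<omega> (Suc k)) + d k \<omega> \<bullet> snd (\<omega> (Suc k)))"

lemma
  fixes c :: "nat \<Rightarrow> ('n::finite, 'd::finite) sample \<Rightarrow> real^'n" and d :: "nat \<Rightarrow> ('n, 'd) sample \<Rightarrow> real^'d"
  assumes c: "\<And>k. k < K \<Longrightarrow> c k \<in> borel_measurable (filt K k)"
    and d: "\<And>k. k < K \<Longrightarrow> d k \<in> borel_measurable (filt K k)"
  shows measurable_noise_integral: "noise_integral K c d \<in> borel_measurable (noise_space K)"
    and nn_integral_noise_integral_le:
      "(\<integral>\<^sup>+\<omega>. ennreal (noise_integral K c d \<omega>) \<partial>noise_space K)
         \<le> (\<integral>\<^sup>+\<omega>. ennreal (- noise_integral K c d \<omega>) \<partial>noise_space K)"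
proof -
  define g where "g k \<omega> = c k \<omega> \<bullet> fst (\<omega> (Suc k)) + d k \<omega> \<bullet> snd (\<omega> (Suc k))" for k \<omega>
  have g_filt: "g k \<in> borel_measurable (filt K (Suc k))" if "k < K" for k
  proof -
    note [measurable] = measurable_filt_fst[of "Suc k" "Suc k"] measurable_filt_snd[of "Suc k" "Suc k"]
      measurable_filt_mono[OF c[OF that], of "Suc k"] measurable_filt_mono[OF d[OF that], of "Suc k"]
    show ?thesis
      unfolding g_def[abs_def] by measurable
  qed
  have g_measurable: "g k \<in> borel_measurable (noise_space K)" if "k < K" for k
    using g_filt that by (intro measurable_filt_imp_noise_space) auto
  then show "noise_integral K c d \<in> borel_measurable (noise_space K)"
    unfolding noise_integral_def[abs_def] g_def[symmetric] by measurable
  have g_fresh: "g k (x(Suc k := y)) = c k x \<bullet> fst y + d k x \<bullet> snd y"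
    if "k < K" "x \<in> space (noise_space K)" for k x y
    using measurable_filt_fun_upd_eq[OF c[OF that(1)] that(2), of "Suc k"]
      measurable_filt_fun_upd_eq[OF d[OF that(1)] that(2), of "Suc k"] that(1)
    by (simp add: g_def)
  show "(\<integral>\<^sup>+\<omega>. ennreal (noise_integral K c d \<omega>) \<partial>noise_space K)
         \<le> (\<integral>\<^sup>+\<omega>. ennreal (- noise_integral K c d \<omega>) \<partial>noise_space K)"
    unfolding noise_integral_def g_def[symmetric]
  proof (rule nn_integral_martingale_sum_le[where N="gauss_vec \<Otimes>\<^sub>M gauss_vec", folded noise_space_def])
    show "prob_space (gauss_vec \<Otimes>\<^sub>M gauss_vec :: ((real^'n) \<times> (real^'d)) measure)"
      by (intro prob_space_pair prob_space_gauss_vec)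
    fix k assume k: "k < K"
    show "g k \<in> borel_measurable (noise_space K)"
      using k by (rule g_measurable)
    show "determined_by_first (Suc k) (space (noise_space K)) (g k)"
      using k by (intro determined_by_first_if_measurable_filt g_filt)
    fix x :: "('n, 'd) sample" assume "x \<in> space (noise_space K)"
    with k show "integrable (gauss_vec \<Otimes>\<^sub>M gauss_vec) (\<lambda>y. g k (x(Suc k := y)))"
      and "(\<integral>y. g k (x(Suc k := y)) \<partial>(gauss_vec \<Otimes>\<^sub>M gauss_vec)) = 0"
      by (simp_all add: g_fresh integrable_gauss_pair_inner integral_gauss_pair_inner)
  qed simp
qed

lemma
  fixes P :: "('n::finite, 'm::finite, 'd::finite) market"
  assumes M_eq: "\<And>a. a \<in> AdmG P \<phi>0 W0 \<Longrightarrow> M a = noise_integral (horizon P) (c a) (d a)"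
    and c: "\<And>a k. a \<in> AdmG P \<phi>0 W0 \<Longrightarrow> k < horizon P \<Longrightarrow> c a k \<in> borel_measurable (filt (horizon P) k)"
    and d: "\<And>a k. a \<in> AdmG P \<phi>0 W0 \<Longrightarrow> k < horizon P \<Longrightarrow> d a k \<in> borel_measurable (filt (horizon P) k)"
  shows dual_feasible_noise_integral: "dual_feasible P \<phi>0 W0 M"
    and measurable_noise_integral_penalty:
      "a \<in> AdmG P \<phi>0 W0 \<Longrightarrow> M a \<in> borel_measurable (noise_space (horizon P))"
  using M_eq nn_integral_noise_integral_le[OF c d] measurable_noise_integral[OF c d]
  unfolding dual_feasible_def by simp_all

section \<open>Weak duality\<close>

lemma
  fixes f :: "'a \<Rightarrow> real"
  assumes [measurable]: "f \<in> borel_measurable M"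
    and le: "(\<integral>\<^sup>+x. ennreal (f x) \<partial>M) \<le> (\<integral>\<^sup>+x. ennreal (- f x) \<partial>M)"
    and finite: "(\<integral>\<^sup>+x. ennreal (- f x) \<partial>M) \<noteq> \<infinity>"
  shows integrable_if_nn_integral_le: "integrable M f"
    and integral_nonpos_if_nn_integral_le: "integral\<^sup>L M f \<le> 0"
proof -
  have "(\<integral>\<^sup>+x. ennreal (f x) \<partial>M) \<noteq> \<infinity>"
    using le finite by (auto simp: top_unique)
  with finite show f: "integrable M f"
    by (simp add: real_integrable_def less_top)
  show "integral\<^sup>L M f \<le> 0"
    using le finite by (simp add: real_lebesgue_integral_def[OF f] enn2real_mono less_top)
qed

lemma H0_le_LM:
  fixes P :: "('n::finite, 'm::finite, 'd::finite) market"
  assumes feasible: "dual_feasible P \<phi>0 W0 M" and regular: "dual_bound_regular P \<alpha> \<beta> \<gamma> \<phi>0 W0 M"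
    and M_measurable: "\<And>a. a \<in> AdmG P \<phi>0 W0 \<Longrightarrow> M a \<in> borel_measurable (noise_space (horizon P))"
    and nonempty: "AdmG P \<phi>0 W0 \<noteq> {}"
  shows "H0 P \<alpha> \<beta> \<gamma> \<phi>0 W0 \<le> LM P \<alpha> \<beta> \<gamma> \<phi>0 W0 M"
  unfolding H0_def LM_def
proof (rule cSUP_least[OF nonempty])
  fix a assume a: "a \<in> AdmG P \<phi>0 W0"
  let ?N = "noise_space (horizon P) :: ('n, 'd) sample measure"
  let ?R = "reward P \<alpha> \<beta> \<gamma> \<phi>0 W0 a" and ?I = "inner_sup P \<alpha> \<beta> \<gamma> \<phi>0 W0 M"
  have R: "integrable ?N ?R" and I: "integrable ?N ?I"
    using regular a unfolding dual_bound_regular_def by auto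
  have pathwise: "?R \<omega> - M a \<omega> \<le> ?I \<omega>" if "\<omega> \<in> space ?N" for \<omega>
    unfolding inner_sup_def
    using regular that a by (intro cSUP_upper) (auto simp: dual_bound_regular_def AdmG_def)
  have "(\<integral>\<^sup>+\<omega>. ennreal (- M a \<omega>) \<partial>?N) \<le> (\<integral>\<^sup>+\<omega>. ennreal (?I \<omega> - ?R \<omega>) \<partial>?N)"
    using pathwise by (intro nn_integral_mono ennreal_leI) (simp add: algebra_simps)
  moreover have "(\<integral>\<^sup>+\<omega>. ennreal (?I \<omega> - ?R \<omega>) \<partial>?N) \<noteq> \<infinity>"
    using Bochner_Integration.integrable_diff[OF I R] by (simp add: real_integrable_def)
  ultimately have finite: "(\<integral>\<^sup>+\<omega>. ennreal (- M a \<omega>) \<partial>?N) \<noteq> \<infinity>"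
    by (auto simp: top_unique)
  have le: "(\<integral>\<^sup>+\<omega>. ennreal (M a \<omega>) \<partial>?N) \<le> (\<integral>\<^sup>+\<omega>. ennreal (- M a \<omega>) \<partial>?N)"
    using feasible a unfolding dual_feasible_def by blast
  note M = integrable_if_nn_integral_le[OF M_measurable[OF a] le finite]
    integral_nonpos_if_nn_integral_le[OF M_measurable[OF a] le finite]
  have "integral\<^sup>L ?N ?R \<le> integral\<^sup>L ?N (\<lambda>\<omega>. ?I \<omega> + M a \<omega>)"
    using R I M(1) pathwise by (intro integral_mono) (auto simp: algebra_simps)
  also have "\<dots> \<le> integral\<^sup>L ?N ?I"
    using I M by simp
  finally show "integral\<^sup>L ?N ?R \<le> integral\<^sup>L ?N ?I" .
qed

section \<open>The penalties\<close>

text \<open>The argument \<open>fac\<close> is the factor in front of the gradient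
  of \<open>J\<^sub>k\<close>: the reference wealth to the power \<open>1 - \<gamma>\<close> in \<open>M\<^sub>1\<close>,
  and the bracket of the corrected terms in \<open>M\<^sub>2\<close>.\<close>

definition penalty_coeff_Z :: "('n::finite, 'm::finite, 'd::finite) market \<Rightarrow> real \<Rightarrow> real
     \<Rightarrow> (nat \<Rightarrow> real^'m \<Rightarrow> real) \<Rightarrow> (nat \<Rightarrow> real^'m \<Rightarrow> real^'m) \<Rightarrow> ('n, 'd) policy
     \<Rightarrow> real^'m \<Rightarrow> real \<Rightarrow> (nat \<Rightarrow> ('n, 'd) sample \<Rightarrow> real) \<Rightarrow> ('n, 'd) policy
     \<Rightarrow> nat \<Rightarrow> ('n, 'd) sample \<Rightarrow> real^'n" where
  "penalty_coeff_Z P \<beta> \<gamma> J gJ ahat \<phi>0 W0 fac a k \<omega> =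
     (let \<phi> = state P \<phi>0 \<omega> k; Wb = wealth P \<phi>0 W0 ahat \<omega> k in
      (\<beta> powr (real k * dt P) * sqrt (dt P)) *\<^sub>R
        (fac k \<omega> *\<^sub>R (gJ k \<phi> v* sigphi1 P k \<phi>)
         + ((1 - \<gamma>) * Wb powr (- \<gamma>) * J k \<phi>) *\<^sub>R (fst (a k \<omega>) v* vol P k \<phi>)))"

definition penalty_coeff_Zt :: "('n::finite, 'm::finite, 'd::finite) market \<Rightarrow> real
     \<Rightarrow> (nat \<Rightarrow> real^'m \<Rightarrow> real^'m) \<Rightarrow> real^'m \<Rightarrow> (nat \<Rightarrow> ('n, 'd) sample \<Rightarrow> real)
     \<Rightarrow> nat \<Rightarrow> ('n, 'd) sample \<Rightarrow> real^'d" where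
  "penalty_coeff_Zt P \<beta> gJ \<phi>0 fac k \<omega> =
     (let \<phi> = state P \<phi>0 \<omega> k in
      (\<beta> powr (real k * dt P) * sqrt (dt P) * fac k \<omega>) *\<^sub>R (gJ k \<phi> v* sigphi2 P k \<phi>))"

definition reference_wealth_factor :: "('n::finite, 'm::finite, 'd::finite) market \<Rightarrow> real
     \<Rightarrow> ('n, 'd) policy \<Rightarrow> real^'m \<Rightarrow> real \<Rightarrow> nat \<Rightarrow> ('n, 'd) sample \<Rightarrow> real" where
  "reference_wealth_factor P \<gamma> ahat \<phi>0 W0 k \<omega> = wealth P \<phi>0 W0 ahat \<omega> k powr (1 - \<gamma>)"

definition corrected_wealth_factor :: "('n::finite, 'm::finite, 'd::finite) market \<Rightarrow> real
     \<Rightarrow> ('n, 'd) policy \<Rightarrow> real^'m \<Rightarrow> real \<Rightarrow> ('n, 'd) policy \<Rightarrow> nat \<Rightarrow> ('n, 'd) sample \<Rightarrow> real" where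
  "corrected_wealth_factor P \<gamma> ahat \<phi>0 W0 a k \<omega> =
     (let Wb = wealth P \<phi>0 W0 ahat \<omega> k in
      if k = 0 then Wb powr (1 - \<gamma>)
      else Wb powr (1 - \<gamma>) + (1 - \<gamma>) * Wb powr (- \<gamma>) *
        ((\<Sum>i\<in>UNIV. (ret P \<phi>0 \<omega> k $ i - Rf P) * (fst (a (k - 1) \<omega>) $ i - fst (ahat (k - 1) \<omega>) $ i))
         - (snd (a (k - 1) \<omega>) - snd (ahat (k - 1) \<omega>))))"

lemma penalty1_eq_noise_integral:
  "penalty1 P \<beta> \<gamma> J gJ ahat \<phi>0 W0 a = noise_integral (horizon P)
     (penalty_coeff_Z P \<beta> \<gamma> J gJ ahat \<phi>0 W0 (reference_wealth_factor P \<gamma> ahat \<phi>0 W0) a)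
     (penalty_coeff_Zt P \<beta> gJ \<phi>0 (reference_wealth_factor P \<gamma> ahat \<phi>0 W0))"
  unfolding penalty1_def noise_integral_def penalty_coeff_Z_def penalty_coeff_Zt_def
    reference_wealth_factor_def
  by (intro ext sum.cong refl)
    (simp add: Let_def dot_lmul_matrix[symmetric] algebra_simps)

lemma penalty2_eq_noise_integral:
  "penalty2 P \<beta> \<gamma> J gJ ahat \<phi>0 W0 a = noise_integral (horizon P)
     (penalty_coeff_Z P \<beta> \<gamma> J gJ ahat \<phi>0 W0 (corrected_wealth_factor P \<gamma> ahat \<phi>0 W0 a) a)
     (penalty_coeff_Zt P \<beta> gJ \<phi>0 (corrected_wealth_factor P \<gamma> ahat \<phi>0 W0 a))"
  unfolding penalty2_def noise_integral_def penalty_coeff_Z_def penalty_coeff_Zt_def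
    corrected_wealth_factor_def
  by (intro ext sum.cong refl)
    (simp add: Let_def dot_lmul_matrix[symmetric] algebra_simps)

locale borel_market =
  fixes P :: "('n::finite, 'm::finite, 'd::finite) market"
  assumes measurable_muphi[measurable]: "\<And>k. muphi P k \<in> borel_measurable borel"
    and measurable_sigphi1[measurable]: "\<And>k. sigphi1 P k \<in> borel_measurable borel"
    and measurable_sigphi2[measurable]: "\<And>k. sigphi2 P k \<in> borel_measurable borel"
    and measurable_drift[measurable]: "\<And>k. drift P k \<in> borel_measurable borel"
    and measurable_vol[measurable]: "\<And>k. vol P k \<in> borel_measurable borel"
begin

lemma measurable_state: "(\<lambda>\<omega>. state P \<phi>0 \<omega> k) \<in> borel_measurable (filt K k)"
proof (induction k)
  case (Suc k)
  have [measurable]: "(\<lambda>\<omega>. state P \<phi>0 \<omega> k) \<in> borel_measurable (filt K (Suc k))"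
    using Suc.IH by (rule measurable_filt_mono) simp
  note [measurable] = measurable_filt_fst[of "Suc k" "Suc k"] measurable_filt_snd[of "Suc k" "Suc k"]
  show ?case
    by (simp add: Let_def) measurable
qed simp

lemma measurable_ret: "(\<lambda>\<omega>. ret P \<phi>0 \<omega> k) \<in> borel_measurable (filt K k)"
proof (cases k)
  case (Suc j)
  have [measurable]: "(\<lambda>\<omega>. state P \<phi>0 \<omega> j) \<in> borel_measurable (filt K (Suc j))"
    using measurable_state by (rule measurable_filt_mono) simp
  note [measurable] = measurable_filt_fst[of "Suc j" "Suc j"]
  show ?thesis
    unfolding Suc by (simp add: Let_def, intro borel_measurable_vec_lambda) measurable
qed simp

lemma measurable_wealth:
  assumes a: "a \<in> AdmG P \<phi>0 W0" and "k \<le> horizon P"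
  shows "(\<lambda>\<omega>. wealth P \<phi>0 W0 a \<omega> k) \<in> borel_measurable (filt (horizon P) k)"
  using \<open>k \<le> horizon P\<close>
proof (induction k)
  case (Suc k)
  have [measurable]: "(\<lambda>\<omega>. wealth P \<phi>0 W0 a \<omega> k) \<in> borel_measurable (filt (horizon P) (Suc k))"
    "(\<lambda>\<omega>. fst (a k \<omega>)) \<in> borel_measurable (filt (horizon P) (Suc k))"
    "(\<lambda>\<omega>. snd (a k \<omega>)) \<in> borel_measurable (filt (horizon P) (Suc k))"
    using Suc AdmG_measurable_fst[OF a, of k] AdmG_measurable_snd[OF a, of k]
    by (auto elim!: measurable_filt_mono)
  have [measurable]: "(\<lambda>\<omega>. ret P \<phi>0 \<omega> (Suc k)) \<in> borel_measurable (filt (horizon P) (Suc k))"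
    by (rule measurable_ret)
  show ?case
    unfolding wealth.simps by measurable
qed simp

lemma measurable_reference_wealth_factor:
  assumes "ahat \<in> AdmG P \<phi>0 W0" "k \<le> horizon P"
  shows "reference_wealth_factor P \<gamma> ahat \<phi>0 W0 k \<in> borel_measurable (filt (horizon P) k)"
  using measurable_wealth[OF assms]
  unfolding reference_wealth_factor_def[abs_def] by measurable

lemma measurable_corrected_wealth_factor:
  assumes ahat: "ahat \<in> AdmG P \<phi>0 W0" and a: "a \<in> AdmG P \<phi>0 W0" and "k \<le> horizon P"
  shows "corrected_wealth_factor P \<gamma> ahat \<phi>0 W0 a k \<in> borel_measurable (filt (horizon P) k)"
proof (cases k)
  case 0
  then show ?thesis
    using measurable_wealth[OF ahat] by (simp add: corrected_wealth_factor_def[abs_def])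
next
  case (Suc j)
  have [measurable]: "(\<lambda>\<omega>. wealth P \<phi>0 W0 ahat \<omega> k) \<in> borel_measurable (filt (horizon P) k)"
    "(\<lambda>\<omega>. ret P \<phi>0 \<omega> k) \<in> borel_measurable (filt (horizon P) k)"
    using measurable_wealth[OF ahat \<open>k \<le> horizon P\<close>] measurable_ret by auto
  have [measurable]: "(\<lambda>\<omega>. fst (a j \<omega>)) \<in> borel_measurable (filt (horizon P) k)"
    "(\<lambda>\<omega>. snd (a j \<omega>)) \<in> borel_measurable (filt (horizon P) k)"
    "(\<lambda>\<omega>. fst (ahat j \<omega>)) \<in> borel_measurable (filt (horizon P) k)"
    "(\<lambda>\<omega>. snd (ahat j \<omega>)) \<in> borel_measurable (filt (horizon P) k)"
    using Suc \<open>k \<le> horizon P\<close> AdmG_measurable_fst[OF a, of j] AdmG_measurable_snd[OF a, of j]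
      AdmG_measurable_fst[OF ahat, of j] AdmG_measurable_snd[OF ahat, of j]
    by (auto elim!: measurable_filt_mono)
  have "k \<noteq> 0" "k - 1 = j"
    using Suc by simp_all
  then show ?thesis
    unfolding corrected_wealth_factor_def[abs_def] Let_def if_not_P[OF \<open>k \<noteq> 0\<close>] \<open>k - 1 = j\<close>
    by measurable
qed

lemma
  fixes J :: "nat \<Rightarrow> real^'m \<Rightarrow> real" and gJ :: "nat \<Rightarrow> real^'m \<Rightarrow> real^'m"
  assumes [measurable]: "J k \<in> borel_measurable borel" "gJ k \<in> borel_measurable borel"
    and ahat: "ahat \<in> AdmG P \<phi>0 W0" and a: "a \<in> AdmG P \<phi>0 W0" and k: "k < horizon P"
    and [measurable]: "fac k \<in> borel_measurable (filt (horizon P) k)"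
  shows measurable_penalty_coeff_Z:
      "penalty_coeff_Z P \<beta> \<gamma> J gJ ahat \<phi>0 W0 fac a k \<in> borel_measurable (filt (horizon P) k)"
    and measurable_penalty_coeff_Zt:
      "penalty_coeff_Zt P \<beta> gJ \<phi>0 fac k \<in> borel_measurable (filt (horizon P) k)"
proof -
  note [measurable] = measurable_state measurable_wealth[OF ahat less_imp_le[OF k]]
    AdmG_measurable_fst[OF a k]
  show "penalty_coeff_Z P \<beta> \<gamma> J gJ ahat \<phi>0 W0 fac a k \<in> borel_measurable (filt (horizon P) k)"
    unfolding penalty_coeff_Z_def Let_def by measurable
  show "penalty_coeff_Zt P \<beta> gJ \<phi>0 fac k \<in> borel_measurable (filt (horizon P) k)"
    unfolding penalty_coeff_Zt_def Let_def by measurable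
qed

lemma
  fixes J :: "nat \<Rightarrow> real^'m \<Rightarrow> real" and gJ :: "nat \<Rightarrow> real^'m \<Rightarrow> real^'m"
  assumes J: "\<And>k. J k \<in> borel_measurable borel" and gJ: "\<And>k. gJ k \<in> borel_measurable borel"
    and ahat: "ahat \<in> AdmG P \<phi>0 W0"
  shows dual_feasible_penalty1: "dual_feasible P \<phi>0 W0 (penalty1 P \<beta> \<gamma> J gJ ahat \<phi>0 W0)"
    and measurable_penalty1: "a \<in> AdmG P \<phi>0 W0 \<Longrightarrow>
      penalty1 P \<beta> \<gamma> J gJ ahat \<phi>0 W0 a \<in> borel_measurable (noise_space (horizon P))"
proof -
  let ?fac = "reference_wealth_factor P \<gamma> ahat \<phi>0 W0"
  have coeff_Z: "penalty_coeff_Z P \<beta> \<gamma> J gJ ahat \<phi>0 W0 ?fac a k \<in> borel_measurable (filt (horizon P) k)"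
    and coeff_Zt: "penalty_coeff_Zt P \<beta> gJ \<phi>0 ?fac k \<in> borel_measurable (filt (horizon P) k)"
    if "a \<in> AdmG P \<phi>0 W0" "k < horizon P" for a k
    using that by (intro measurable_penalty_coeff_Z[OF J gJ ahat] measurable_penalty_coeff_Zt[OF J gJ ahat]
        measurable_reference_wealth_factor[OF ahat]; simp)+
  note coeffs = penalty1_eq_noise_integral coeff_Z coeff_Zt
  show "dual_feasible P \<phi>0 W0 (penalty1 P \<beta> \<gamma> J gJ ahat \<phi>0 W0)"
    by (rule dual_feasible_noise_integral[OF coeffs])
  show "a \<in> AdmG P \<phi>0 W0 \<Longrightarrow> penalty1 P \<beta> \<gamma> J gJ ahat \<phi>0 W0 a \<in> borel_measurable (noise_space (horizon P))"
    by (rule measurable_noise_integral_penalty[OF coeffs])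
qed

lemma
  fixes J :: "nat \<Rightarrow> real^'m \<Rightarrow> real" and gJ :: "nat \<Rightarrow> real^'m \<Rightarrow> real^'m"
  assumes J: "\<And>k. J k \<in> borel_measurable borel" and gJ: "\<And>k. gJ k \<in> borel_measurable borel"
    and ahat: "ahat \<in> AdmG P \<phi>0 W0"
  shows dual_feasible_penalty2: "dual_feasible P \<phi>0 W0 (penalty2 P \<beta> \<gamma> J gJ ahat \<phi>0 W0)"
    and measurable_penalty2: "a \<in> AdmG P \<phi>0 W0 \<Longrightarrow>
      penalty2 P \<beta> \<gamma> J gJ ahat \<phi>0 W0 a \<in> borel_measurable (noise_space (horizon P))"
proof -
  have coeff_Z: "penalty_coeff_Z P \<beta> \<gamma> J gJ ahat \<phi>0 W0 (corrected_wealth_factor P \<gamma> ahat \<phi>0 W0 a) a k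
      \<in> borel_measurable (filt (horizon P) k)"
    and coeff_Zt: "penalty_coeff_Zt P \<beta> gJ \<phi>0 (corrected_wealth_factor P \<gamma> ahat \<phi>0 W0 a) k
      \<in> borel_measurable (filt (horizon P) k)"
    if "a \<in> AdmG P \<phi>0 W0" "k < horizon P" for a k
    using that by (intro measurable_penalty_coeff_Z[OF J gJ ahat] measurable_penalty_coeff_Zt[OF J gJ ahat]
        measurable_corrected_wealth_factor[OF ahat]; simp)+
  note coeffs = penalty2_eq_noise_integral coeff_Z coeff_Zt
  show "dual_feasible P \<phi>0 W0 (penalty2 P \<beta> \<gamma> J gJ ahat \<phi>0 W0)"
    by (rule dual_feasible_noise_integral[OF coeffs])
  show "a \<in> AdmG P \<phi>0 W0 \<Longrightarrow> penalty2 P \<beta> \<gamma> J gJ ahat \<phi>0 W0 a \<in> borel_measurable (noise_space (horizon P))"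
    by (rule measurable_noise_integral_penalty[OF coeffs])
qed

end

theorem proposition4:
  fixes P :: "('n::finite, 'm::finite, 'd::finite) market"
    and \<alpha> \<beta> \<gamma> W0 :: real and \<phi>0 :: "real^'m"
    and J :: "nat \<Rightarrow> real^'m \<Rightarrow> real" and gJ :: "nat \<Rightarrow> real^'m \<Rightarrow> real^'m"
    and ahat :: "('n, 'd) policy"
  assumes "dt P > 0" and "\<gamma> > 0" and "0 \<le> \<alpha>" and "\<alpha> \<le> 1"
    and "\<And>k. muphi P k \<in> borel_measurable borel"
    and "\<And>k. sigphi1 P k \<in> borel_measurable borel"
    and "\<And>k. sigphi2 P k \<in> borel_measurable borel"
    and "\<And>k. drift P k \<in> borel_measurable borel"
    and "\<And>k. vol P k \<in> borel_measurable borel"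
    and "\<And>k. J k \<in> borel_measurable borel"
    and "\<And>k. gJ k \<in> borel_measurable borel"
    and ahat: "ahat \<in> AdmG P \<phi>0 W0"
  shows "dual_feasible P \<phi>0 W0 (penalty1 P \<beta> \<gamma> J gJ ahat \<phi>0 W0)
       \<and> dual_feasible P \<phi>0 W0 (penalty2 P \<beta> \<gamma> J gJ ahat \<phi>0 W0)
       \<and> (dual_bound_regular P \<alpha> \<beta> \<gamma> \<phi>0 W0 (penalty1 P \<beta> \<gamma> J gJ ahat \<phi>0 W0)
            \<longrightarrow> H0 P \<alpha> \<beta> \<gamma> \<phi>0 W0 \<le> LM P \<alpha> \<beta> \<gamma> \<phi>0 W0 (penalty1 P \<beta> \<gamma> J gJ ahat \<phi>0 W0))
       \<and> (dual_bound_regular P \<alpha> \<beta> \<gamma> \<phi>0 W0 (penalty2 P \<beta> \<gamma> J gJ ahat \<phi>0 W0)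
            \<longrightarrow> H0 P \<alpha> \<beta> \<gamma> \<phi>0 W0 \<le> LM P \<alpha> \<beta> \<gamma> \<phi>0 W0 (penalty2 P \<beta> \<gamma> J gJ ahat \<phi>0 W0))"
proof -
  interpret borel_market P
    using assms(5-9) by unfold_locales
  have nonempty: "AdmG P \<phi>0 W0 \<noteq> {}"
    using ahat by blast
  note penalty1 = dual_feasible_penalty1[where J=J and gJ=gJ, OF assms(10,11) ahat]
    measurable_penalty1[where J=J and gJ=gJ, OF assms(10,11) ahat]
  note penalty2 = dual_feasible_penalty2[where J=J and gJ=gJ, OF assms(10,11) ahat]
    measurable_penalty2[where J=J and gJ=gJ, OF assms(10,11) ahat]
  show ?thesis
    using H0_le_LM[OF penalty1(1) _ penalty1(2) nonempty] H0_le_LM[OF penalty2(1) _ penalty2(2) nonempty]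
      penalty1(1) penalty2(1) by blast
qed

end
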